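(* Let $\mathbf{p}=(p_1,\dots,p_k)$ be a probability distribution on $[k]$, let $X_1,\dots,X_M$ be i.i.d. with distribution $\mathbf{p}$, and let $\hat p_i=\frac1M\sum_{j=1}^M\mathbf{1}\{X_j=i\}$ and $\hat{\mathbf{p}}=(\hat p_1,\dots,\hat p_k)$. With $L(\mathbf{q})=\sum_{i=1}^k q_i(1-q_i)$, for every $\epsilon\in(0,2)$, $$\mathbb{P}\left[|L(\hat{\mathbf{p}})-L(\mathbf{p})|\ge \frac1M+\sqrt{\frac{2}{M}\log\frac{2}{\epsilon}}\right]\le\epsilon.$$ In particular, with probability at least $1-\frac1M$, $|L(\hat{\mathbf{p}})-L(\mathbf{p})|\le \frac1M+\sqrt{\frac{2\log(2M)}{M}}$.
   Context: $M\ge 1$ is an integer; $\log$ is the natural logarithm. *)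

theory Defs
  imports "HOL-Probability.Probability"
begin

definition L_fun :: "nat \<Rightarrow> (nat \<Rightarrow> real) \<Rightarrow> real" where
  "L_fun k q = (\<Sum>i=1..k. q i * (1 - q i))"

definition emp_freq :: "nat \<Rightarrow> (nat \<Rightarrow> nat) \<Rightarrow> nat \<Rightarrow> real" where
  "emp_freq M X i = (1 / real M) * (\<Sum>j=1..M. if X j = i then 1 else 0)"

text \<open>Law of an i.i.d. sample X_1..X_M with distribution p (components outside {1..M} are 0).\<close>
definition iid_sample :: "nat \<Rightarrow> nat pmf \<Rightarrow> (nat \<Rightarrow> nat) pmf" where
  "iid_sample M p = Pi_pmf {1..M} 0 (\<lambda>_. p)"

end

theory Submission
  imports Defs
begin

text \<open>Replacing one sample point moves two empirical frequencies by 1/M each, and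
q \<mapsto> q (1 - q) is 1-Lipschitz on [0,1], so L of the empirical distribution has bounded
differences 2/M. McDiarmid's inequality (proved for products of finitely supported pmfs by
integrating out one coordinate at a time and applying Hoeffding's lemma to it) bounds its
deviation from its mean by sqrt (2/M ln (2/\<epsilon>)) outside an event of probability \<epsilon>.
The mean is (1 - 1/M) L(p), since an empirical frequency has second moment
p_i^2 + p_i (1 - p_i) / M, so the bias is at most L(p)/M \<le> 1/M.\<close>

lemma finite_set_Pi_pmf:
  assumes "finite A" and "\<And>i. i \<in> A \<Longrightarrow> finite (set_pmf (P i))"
  shows "finite (set_pmf (Pi_pmf A d P))"
  by (rule finite_subset[OF set_Pi_pmf_subset'[OF assms(1)]]) (use assms in auto)

lemma expectation_pair_pmf_finite:
  fixes G :: "'a \<times> 'b \<Rightarrow> real"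
  assumes "finite (set_pmf R)" and "finite (set_pmf Q)"
  shows "measure_pmf.expectation (pair_pmf R Q) G =
         measure_pmf.expectation Q (\<lambda>x. measure_pmf.expectation R (\<lambda>y. G (y, x)))"
proof -
  have "measure_pmf.expectation (pair_pmf R Q) G =
        (\<Sum>z\<in>set_pmf R \<times> set_pmf Q. G z * pmf (pair_pmf R Q) z)"
    by (rule integral_measure_pmf_real) (use assms in auto)
  also have "\<dots> = (\<Sum>y\<in>set_pmf R. \<Sum>x\<in>set_pmf Q. G (y, x) * (pmf R y * pmf Q x))"
    by (simp add: sum.cartesian_product' pmf_pair)
  also have "\<dots> = (\<Sum>x\<in>set_pmf Q. (\<Sum>y\<in>set_pmf R. G (y, x) * pmf R y) * pmf Q x)"
    by (subst sum.swap) (simp add: sum_distrib_left sum_distrib_right mult_ac)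
  also have "\<dots> = measure_pmf.expectation Q (\<lambda>x. measure_pmf.expectation R (\<lambda>y. G (y, x)))"
    using assms by (simp add: integral_measure_pmf_real[where A = "set_pmf R"]
                              integral_measure_pmf_real[where A = "set_pmf Q"])
  finally show ?thesis .
qed

lemma expectation_Pi_pmf_insert:
  fixes F :: "('a \<Rightarrow> 'b) \<Rightarrow> real"
  assumes "finite A" and "a \<notin> A" and "\<And>i. i \<in> insert a A \<Longrightarrow> finite (set_pmf (P i))"
  shows "measure_pmf.expectation (Pi_pmf (insert a A) d P) F =
    measure_pmf.expectation (Pi_pmf A d P) (\<lambda>x. measure_pmf.expectation (P a) (\<lambda>y. F (x(a := y))))"
  using assms
  by (simp add: Pi_pmf_insert expectation_pair_pmf_finite finite_set_Pi_pmf case_prod_beta)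

lemma Hoeffdings_lemma_pmf:
  fixes g :: "'a \<Rightarrow> real"
  assumes fin: "finite (set_pmf R)" and "l \<ge> 0"
    and osc: "\<And>y y'. y \<in> set_pmf R \<Longrightarrow> y' \<in> set_pmf R \<Longrightarrow> \<bar>g y - g y'\<bar> \<le> c"
  shows "measure_pmf.expectation R (\<lambda>y. exp (l * (g y - measure_pmf.expectation R g)))
           \<le> exp (l\<^sup>2 * c\<^sup>2 / 8)"
proof (cases "l = 0")
  case False
  with \<open>l \<ge> 0\<close> have "l > 0" by simp
  define a where "a = Min (g ` set_pmf R)"
  have "a \<in> g ` set_pmf R"
    unfolding a_def using fin by (intro Min_in) (auto simp: set_pmf_not_empty)
  then obtain y0 where y0: "y0 \<in> set_pmf R" "a = g y0" by blast
  have "g y \<in> {a..a + c}" if "y \<in> set_pmf R" for y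
  proof -
    have "a \<le> g y" unfolding a_def using fin that by simp
    moreover have "g y \<le> a + c" using osc[OF that y0(1)] y0(2) by linarith
    ultimately show ?thesis by simp
  qed
  then interpret interval_bounded_random_variable "measure_pmf R" g a "a + c"
    by unfold_locales (auto intro: AE_pmfI)
  have "ennreal (measure_pmf.expectation R (\<lambda>y. exp (l * (g y - measure_pmf.expectation R g))))
        = (\<integral>\<^sup>+y. exp (l * (g y - measure_pmf.expectation R g)) \<partial>measure_pmf R)"
    by (rule nn_integral_eq_integral[symmetric]) (simp_all add: integrable_measure_pmf_finite fin)
  also have "\<dots> \<le> ennreal (exp (l\<^sup>2 * (a + c - a)\<^sup>2 / 8))"
    by (rule Hoeffdings_lemma_nn_integral[OF \<open>l > 0\<close>])
  finally show ?thesis by (simp add: ennreal_le_iff)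
qed simp

lemma bounded_differences_expectation_fun_upd:
  fixes f :: "('a \<Rightarrow> 'b) \<Rightarrow> real"
  assumes "finite (set_pmf R)" and "i \<noteq> a"
    and "\<And>x v. \<bar>f x - f (x(i := v))\<bar> \<le> c"
  shows "\<bar>measure_pmf.expectation R (\<lambda>y. f (x(a := y)))
           - measure_pmf.expectation R (\<lambda>y. f ((x(i := v))(a := y)))\<bar> \<le> c"
proof -
  have "measure_pmf.expectation R (\<lambda>y. f (x(a := y)))
        - measure_pmf.expectation R (\<lambda>y. f ((x(i := v))(a := y)))
      = measure_pmf.expectation R (\<lambda>y. f (x(a := y)) - f ((x(a := y))(i := v)))"
    using assms(1,2)
    by (subst Bochner_Integration.integral_diff) (auto simp: integrable_measure_pmf_finite fun_upd_twist)
  also have "\<bar>\<dots>\<bar> \<le> measure_pmf.expectation R (\<lambda>y. \<bar>f (x(a := y)) - f ((x(a := y))(i := v))\<bar>)"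
    using integral_norm_bound by force
  also have "\<dots> \<le> c"
    using assms(1,3) by (intro measure_pmf.integral_le_const) (auto simp: integrable_measure_pmf_finite)
  finally show ?thesis .
qed

lemma McDiarmid_mgf:
  fixes f :: "('a \<Rightarrow> 'b) \<Rightarrow> real"
  assumes "finite A" and "\<And>i. i \<in> A \<Longrightarrow> finite (set_pmf (P i))" and "l \<ge> 0"
    and "\<And>x i v. i \<in> A \<Longrightarrow> \<bar>f x - f (x(i := v))\<bar> \<le> c i"
  shows "measure_pmf.expectation (Pi_pmf A d P)
           (\<lambda>x. exp (l * (f x - measure_pmf.expectation (Pi_pmf A d P) f)))
         \<le> exp (l\<^sup>2 * (\<Sum>i\<in>A. (c i)\<^sup>2) / 8)"
  using assms
proof (induction A arbitrary: f rule: finite_induct)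
  case (insert a A f)
  define Q where "Q = Pi_pmf A d P"
  define R where "R = P a"
  have finR: "finite (set_pmf R)" and finQ: "finite (set_pmf Q)"
    using insert by (auto simp: R_def Q_def intro: finite_set_Pi_pmf)
  have peel: "measure_pmf.expectation (Pi_pmf (insert a A) d P) F =
      measure_pmf.expectation Q (\<lambda>x. measure_pmf.expectation R (\<lambda>y. F (x(a := y))))"
    for F :: "('a \<Rightarrow> 'b) \<Rightarrow> real"
    unfolding Q_def R_def by (rule expectation_Pi_pmf_insert) (use insert in auto)
  define g where "g x = measure_pmf.expectation R (\<lambda>y. f (x(a := y)))" for x
  define \<mu> where "\<mu> = measure_pmf.expectation Q g"
  have mean: "measure_pmf.expectation (Pi_pmf (insert a A) d P) f = \<mu>"
    unfolding \<mu>_def g_def[abs_def] by (rule peel)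
  have IH: "measure_pmf.expectation Q (\<lambda>x. exp (l * (g x - \<mu>)))
      \<le> exp (l\<^sup>2 * (\<Sum>i\<in>A. (c i)\<^sup>2) / 8)"
    unfolding \<mu>_def Q_def g_def
  proof (rule insert.IH)
    fix x i v assume "i \<in> A"
    with insert show "\<bar>measure_pmf.expectation R (\<lambda>y. f (x(a := y)))
                      - measure_pmf.expectation R (\<lambda>y. f ((x(i := v))(a := y)))\<bar> \<le> c i"
      by (intro bounded_differences_expectation_fun_upd finR) auto
  qed (use insert in auto)
  have step: "measure_pmf.expectation R (\<lambda>y. exp (l * (f (x(a := y)) - g x)))
      \<le> exp (l\<^sup>2 * (c a)\<^sup>2 / 8)" for x
    unfolding g_def
  proof (rule Hoeffdings_lemma_pmf[OF finR \<open>l \<ge> 0\<close>])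
    fix y y'
    show "\<bar>f (x(a := y)) - f (x(a := y'))\<bar> \<le> c a"
      using insert.prems(3)[of a "x(a := y)" y'] by (metis fun_upd_upd insertI1)
  qed
  have factor: "exp (l * (f (x(a := y)) - \<mu>))
      = exp (l * (g x - \<mu>)) * exp (l * (f (x(a := y)) - g x))" for x y by (simp add: mult_exp_exp algebra_simps)
  have "measure_pmf.expectation (Pi_pmf (insert a A) d P) (\<lambda>x. exp (l * (f x - \<mu>)))
     = measure_pmf.expectation Q (\<lambda>x. exp (l * (g x - \<mu>)) *
         measure_pmf.expectation R (\<lambda>y. exp (l * (f (x(a := y)) - g x))))"
    unfolding peel factor by simp
  also have "\<dots> \<le> measure_pmf.expectation Q (\<lambda>x. exp (l * (g x - \<mu>)) * exp (l\<^sup>2 * (c a)\<^sup>2 / 8))"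
    by (intro integral_mono mult_left_mono step) (auto simp: integrable_measure_pmf_finite finQ)
  also have "\<dots> \<le> exp (l\<^sup>2 * (\<Sum>i\<in>A. (c i)\<^sup>2) / 8) * exp (l\<^sup>2 * (c a)\<^sup>2 / 8)"
    by (simp add: mult_right_mono IH)
  also have "\<dots> = exp (l\<^sup>2 * (\<Sum>i\<in>insert a A. (c i)\<^sup>2) / 8)"
    using insert.hyps by (simp add: mult_exp_exp algebra_simps add_divide_distrib)
  finally show ?case by (simp add: mean)
qed simp

lemma McDiarmid_upper_tail:
  fixes f :: "('a \<Rightarrow> 'b) \<Rightarrow> real"
  assumes "finite A" and "\<And>i. i \<in> A \<Longrightarrow> finite (set_pmf (P i))" and "t \<ge> 0"
    and "\<And>x i v. i \<in> A \<Longrightarrow> \<bar>f x - f (x(i := v))\<bar> \<le> c i"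
  shows "measure_pmf.prob (Pi_pmf A d P) {x. f x - measure_pmf.expectation (Pi_pmf A d P) f \<ge> t}
           \<le> exp (-2 * t\<^sup>2 / (\<Sum>i\<in>A. (c i)\<^sup>2))"
proof -
  define Q where "Q = Pi_pmf A d P"
  define S where "S = (\<Sum>i\<in>A. (c i)\<^sup>2)"
  define \<mu> where "\<mu> = measure_pmf.expectation Q f"
  show ?thesis
  proof (cases "t > 0 \<and> S > 0")
    case True
    define l where "l = 4 * t / S" \<comment> \<open>minimises \<open>l\<^sup>2 S / 8 - l t\<close>\<close>
    have "l > 0" using True by (simp add: l_def)
    have finQ: "finite (set_pmf Q)" unfolding Q_def using assms(1,2) by (rule finite_set_Pi_pmf)
    have "measure_pmf.prob Q {x. f x - \<mu> \<ge> t}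
        \<le> exp (- l * t) * measure_pmf.expectation Q (\<lambda>x. exp (l * (f x - \<mu>)))"
      using measure_pmf.Chernoff_ineq_ge[OF \<open>l > 0\<close>, where M = Q and A = UNIV
                                             and f = "\<lambda>x. f x - \<mu>" and a = t] finQ
      by (simp add: set_integrable_def set_lebesgue_integral_def integrable_measure_pmf_finite)
    also have "\<dots> \<le> exp (- l * t) * exp (l\<^sup>2 * S / 8)"
      unfolding \<mu>_def Q_def S_def using \<open>l > 0\<close>
      by (intro mult_left_mono McDiarmid_mgf assms) auto
    also have "\<dots> = exp (-2 * t\<^sup>2 / S)"
      using True by (simp add: mult_exp_exp l_def power2_eq_square field_simps)
    finally show ?thesis by (simp add: Q_def S_def \<mu>_def)
  next
    case False
    \<comment> \<open>then \<open>t = 0\<close> or \<open>S = 0\<close>, and with \<open>x / 0 = 0\<close> the bound is the trivial \<open>exp 0\<close>\<close>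
    with \<open>t \<ge> 0\<close> have "exp (-2 * t\<^sup>2 / S) = 1"
      using sum_nonneg[of A "\<lambda>i. (c i)\<^sup>2"] by (auto simp: S_def)
    then show ?thesis unfolding S_def[symmetric] by (metis measure_pmf.prob_le_1)
  qed
qed

lemma McDiarmid_inequality:
  fixes f :: "('a \<Rightarrow> 'b) \<Rightarrow> real"
  assumes "finite A" and "\<And>i. i \<in> A \<Longrightarrow> finite (set_pmf (P i))" and "t \<ge> 0"
    and bd: "\<And>x i v. i \<in> A \<Longrightarrow> \<bar>f x - f (x(i := v))\<bar> \<le> c i"
  shows "measure_pmf.prob (Pi_pmf A d P) {x. \<bar>f x - measure_pmf.expectation (Pi_pmf A d P) f\<bar> \<ge> t}
           \<le> 2 * exp (-2 * t\<^sup>2 / (\<Sum>i\<in>A. (c i)\<^sup>2))"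
proof -
  define Q where "Q = Pi_pmf A d P"
  define \<mu> where "\<mu> = measure_pmf.expectation Q f"
  let ?B = "exp (-2 * t\<^sup>2 / (\<Sum>i\<in>A. (c i)\<^sup>2))"
  have upper: "measure_pmf.prob Q {x. f x - \<mu> \<ge> t} \<le> ?B"
    unfolding \<mu>_def Q_def by (rule McDiarmid_upper_tail[OF assms])
  have "\<bar>- f x - - f (x(i := v))\<bar> \<le> c i" if "i \<in> A" for x i v
    using bd[OF that, of x v] by linarith
  from McDiarmid_upper_tail[OF assms(1-3) this]
  have lower: "measure_pmf.prob Q {x. - f x - (- \<mu>) \<ge> t} \<le> ?B"
    by (simp add: Q_def \<mu>_def)
  have "{x. \<bar>f x - \<mu>\<bar> \<ge> t} = {x. f x - \<mu> \<ge> t} \<union> {x. - f x - (- \<mu>) \<ge> t}"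
    by auto
  then have "measure_pmf.prob Q {x. \<bar>f x - \<mu>\<bar> \<ge> t}
      \<le> measure_pmf.prob Q {x. f x - \<mu> \<ge> t} + measure_pmf.prob Q {x. - f x - (- \<mu>) \<ge> t}"
    by (simp add: measure_Un_le)
  also have "\<dots> \<le> 2 * ?B"
    using upper lower by simp
  finally show ?thesis by (simp add: Q_def \<mu>_def)
qed

lemma emp_freq_nonneg: "0 \<le> emp_freq M X i"
  unfolding emp_freq_def by (intro mult_nonneg_nonneg sum_nonneg) auto

lemma emp_freq_le_1: "emp_freq M X i \<le> 1"
proof -
  have "(\<Sum>j=1..M. if X j = i then 1 else 0) \<le> (\<Sum>j=1..M. 1::real)"
    by (intro sum_mono) auto
  then show ?thesis
    unfolding emp_freq_def by (cases "M = 0") (auto simp: divide_simps)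
qed

lemma emp_freq_fun_upd:
  assumes "j \<in> {1..M}"
  shows "emp_freq M X i - emp_freq M (X(j := v)) i =
           ((if X j = i then 1 else 0) - (if v = i then 1 else 0)) / real M"
proof -
  let ?N = "\<lambda>Y. \<Sum>j'=1..M. if Y j' = i then 1 else (0::real)"
  have split: "?N Y = (if Y j = i then 1 else 0) + (\<Sum>j'\<in>{1..M} - {j}. if Y j' = i then 1 else 0)"
    for Y
    by (rule sum.remove[OF finite_atLeastAtMost assms])
  have "(\<Sum>j'\<in>{1..M} - {j}. if (X(j := v)) j' = i then 1 else 0)
      = (\<Sum>j'\<in>{1..M} - {j}. if X j' = i then 1 else (0::real))"
    by (intro sum.cong) auto
  then have "?N X - ?N (X(j := v)) = (if X j = i then 1 else 0) - (if v = i then 1 else 0)"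
    unfolding split[of X] split[of "X(j := v)"] by simp
  then show ?thesis
    unfolding emp_freq_def right_diff_distrib[symmetric] by simp
qed

lemma abs_diff_mult_one_minus_le:
  fixes a b :: real
  assumes "0 \<le> a" "a \<le> 1" "0 \<le> b" "b \<le> 1"
  shows "\<bar>a * (1 - a) - b * (1 - b)\<bar> \<le> \<bar>a - b\<bar>"
proof -
  have "\<bar>a * (1 - a) - b * (1 - b)\<bar> = \<bar>a - b\<bar> * \<bar>1 - a - b\<bar>"
    by (simp add: abs_mult[symmetric] algebra_simps)
  also have "\<dots> \<le> \<bar>a - b\<bar>"
    using assms by (intro mult_left_le) auto
  finally show ?thesis .
qed

lemma L_fun_emp_freq_fun_upd:
  assumes "j \<in> {1..M}"
  shows "\<bar>L_fun k (emp_freq M X) - L_fun k (emp_freq M (X(j := v)))\<bar> \<le> 2 / real M"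
proof -
  let ?\<delta> = "\<lambda>y i. if y = i then 1 else (0::real)"
  have "\<bar>L_fun k (emp_freq M X) - L_fun k (emp_freq M (X(j := v)))\<bar>
      \<le> (\<Sum>i=1..k. \<bar>emp_freq M X i * (1 - emp_freq M X i)
                     - emp_freq M (X(j := v)) i * (1 - emp_freq M (X(j := v)) i)\<bar>)"
    unfolding L_fun_def sum_subtractf[symmetric] by (rule sum_abs)
  also have "\<dots> \<le> (\<Sum>i=1..k. \<bar>emp_freq M X i - emp_freq M (X(j := v)) i\<bar>)"
    by (intro sum_mono abs_diff_mult_one_minus_le emp_freq_nonneg emp_freq_le_1)
  also have "\<dots> \<le> (\<Sum>i=1..k. (?\<delta> (X j) i + ?\<delta> v i) / real M)"
    unfolding emp_freq_fun_upd[OF assms] by (intro sum_mono) (auto simp: abs_div)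
  also have "\<dots> = ((\<Sum>i=1..k. ?\<delta> (X j) i) + (\<Sum>i=1..k. ?\<delta> v i)) / real M"
    unfolding sum.distrib[symmetric] sum_divide_distrib by (rule refl)
  also have "\<dots> \<le> 2 / real M"
    by (intro divide_right_mono) (auto simp: sum.delta)
  finally show ?thesis .
qed

lemma expectation_prod_indicator_Pi_pmf:
  assumes "finite A" and "B \<subseteq> A"
  shows "measure_pmf.expectation (Pi_pmf A d (\<lambda>_. p)) (\<lambda>X. \<Prod>j\<in>B. if X j = i then 1 else 0)
           = pmf p i ^ card B"
proof -
  define F where "F j v = (if j \<in> B then (if v = i then 1 else 0) else (1::real))" for j v
  have expectation_F: "measure_pmf.expectation p (F j) = (if j \<in> B then pmf p i else 1)" for j
  proof (cases "j \<in> B")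
    case True
    then have "F j = indicator {i}"
      by (auto simp: F_def indicator_def)
    with True show ?thesis by (simp add: measure_pmf_single)
  qed (simp add: F_def[abs_def])
  have "(\<Prod>j\<in>B. if X j = i then 1 else 0) = (\<Prod>j\<in>A. F j (X j))" for X
    using assms by (simp add: F_def prod.If_cases Int_absorb1)
  then have "measure_pmf.expectation (Pi_pmf A d (\<lambda>_. p)) (\<lambda>X. \<Prod>j\<in>B. if X j = i then 1 else 0)
      = measure_pmf.expectation (Pi_pmf A d (\<lambda>_. p)) (\<lambda>X. \<Prod>j\<in>A. F j (X j))"
    by simp
  also have "\<dots> = (\<Prod>j\<in>A. measure_pmf.expectation p (F j))"
    by (rule expectation_prod_Pi_pmf[OF assms(1)])
       (auto simp: F_def intro!: measure_pmf.integrable_const_bound[where B = 1])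
  also have "\<dots> = pmf p i ^ card B"
    using assms by (simp add: expectation_F prod.If_cases Int_absorb1)
  finally show ?thesis .
qed

lemma finite_set_iid_sample: "finite (set_pmf p) \<Longrightarrow> finite (set_pmf (iid_sample M p))"
  unfolding iid_sample_def by (rule finite_set_Pi_pmf) auto

lemma expectation_emp_freq:
  assumes "M \<ge> 1" and "finite (set_pmf p)"
  shows "measure_pmf.expectation (iid_sample M p) (\<lambda>X. emp_freq M X i) = pmf p i"
proof -
  have "measure_pmf.expectation (iid_sample M p) (\<lambda>X. if X j = i then 1 else 0) = pmf p i"
    if "j \<in> {1..M}" for j
    using expectation_prod_indicator_Pi_pmf[of "{1..M}" "{j}"] that by (simp add: iid_sample_def)
  then show ?thesis
    using assms unfolding emp_freq_def
    by (simp add: Bochner_Integration.integral_sum integrable_measure_pmf_finite finite_set_iid_sample)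
qed

lemma expectation_emp_freq_squared:
  assumes "M \<ge> 1" and "finite (set_pmf p)"
  shows "measure_pmf.expectation (iid_sample M p) (\<lambda>X. (emp_freq M X i)\<^sup>2)
           = (pmf p i)\<^sup>2 + pmf p i * (1 - pmf p i) / real M"
proof -
  define q where "q = pmf p i"
  let ?e = "\<lambda>j X. if X j = i then 1 else (0::real)"
  have idem: "?e j X * ?e j X = ?e j X" for j X
    by simp
  have pair: "measure_pmf.expectation (iid_sample M p) (\<lambda>X. ?e j X * ?e j' X)
      = q\<^sup>2 + (if j' = j then q - q\<^sup>2 else 0)" if "j \<in> {1..M}" "j' \<in> {1..M}" for j j'
    using expectation_prod_indicator_Pi_pmf[of "{1..M}" "{j, j'}" 0 p i] that
    by (cases "j = j'") (auto simp: iid_sample_def q_def power2_eq_square idem)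
  have "(emp_freq M X i)\<^sup>2 = (\<Sum>j=1..M. \<Sum>j'=1..M. ?e j X * ?e j' X) / (real M)\<^sup>2" for X
    by (simp add: emp_freq_def power2_eq_square sum_product)
  then have "measure_pmf.expectation (iid_sample M p) (\<lambda>X. (emp_freq M X i)\<^sup>2)
      = (\<Sum>j=1..M. \<Sum>j'=1..M. q\<^sup>2 + (if j' = j then q - q\<^sup>2 else 0)) / (real M)\<^sup>2"
    using assms
    by (simp add: Bochner_Integration.integral_sum integrable_measure_pmf_finite
                  finite_set_iid_sample pair)
  also have "\<dots> = q\<^sup>2 + q * (1 - q) / real M"
    using assms by (simp add: sum.distrib power2_eq_square field_simps)
  finally show ?thesis by (simp add: q_def)
qed

lemma expectation_L_fun_emp_freq:
  assumes "M \<ge> 1" and "finite (set_pmf p)"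
  shows "measure_pmf.expectation (iid_sample M p) (\<lambda>X. L_fun k (emp_freq M X))
           = (1 - 1 / real M) * L_fun k (pmf p)"
proof -
  have "measure_pmf.expectation (iid_sample M p) (\<lambda>X. emp_freq M X i * (1 - emp_freq M X i))
      = (1 - 1 / real M) * (pmf p i * (1 - pmf p i))" for i
  proof -
    have "measure_pmf.expectation (iid_sample M p) (\<lambda>X. emp_freq M X i * (1 - emp_freq M X i))
        = measure_pmf.expectation (iid_sample M p) (\<lambda>X. emp_freq M X i - (emp_freq M X i)\<^sup>2)"
      by (simp add: right_diff_distrib power2_eq_square)
    also have "\<dots> = measure_pmf.expectation (iid_sample M p) (\<lambda>X. emp_freq M X i)
          - measure_pmf.expectation (iid_sample M p) (\<lambda>X. (emp_freq M X i)\<^sup>2)"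
      using assms
      by (intro Bochner_Integration.integral_diff)
         (simp_all add: integrable_measure_pmf_finite finite_set_iid_sample)
    also have "\<dots> = (1 - 1 / real M) * (pmf p i * (1 - pmf p i))"
      using assms by (simp add: expectation_emp_freq expectation_emp_freq_squared)
                     (simp add: field_simps power2_eq_square)
    finally show ?thesis .
  qed
  then show ?thesis
    using assms unfolding L_fun_def
    by (simp add: Bochner_Integration.integral_sum integrable_measure_pmf_finite finite_set_iid_sample
                  sum_distrib_left)
qed

lemma L_fun_pmf_nonneg: "0 \<le> L_fun k (pmf p)"
  unfolding L_fun_def by (intro sum_nonneg mult_nonneg_nonneg) (auto simp: pmf_le_1)

lemma L_fun_pmf_le_1: "L_fun k (pmf p) \<le> 1"
proof -
  have "L_fun k (pmf p) \<le> (\<Sum>i=1..k. pmf p i)"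
    unfolding L_fun_def by (intro sum_mono) (auto simp: pmf_le_1 mult_left_le)
  also have "\<dots> = measure_pmf.prob p {1..k}"
    by (simp add: measure_measure_pmf_finite)
  also have "\<dots> \<le> 1"
    by simp
  finally show ?thesis .
qed

lemma L_fun_emp_freq_bias:
  assumes "M \<ge> 1" and "finite (set_pmf p)"
  shows "\<bar>measure_pmf.expectation (iid_sample M p) (\<lambda>X. L_fun k (emp_freq M X))
            - L_fun k (pmf p)\<bar> \<le> 1 / real M"
  using assms L_fun_pmf_nonneg[of k p] L_fun_pmf_le_1[of k p]
  by (simp add: expectation_L_fun_emp_freq algebra_simps divide_right_mono)

lemma L_fun_emp_freq_concentration:
  assumes "finite (set_pmf p)" and "t \<ge> 0"
  shows "measure_pmf.prob (iid_sample M p)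
           {X. \<bar>L_fun k (emp_freq M X)
                 - measure_pmf.expectation (iid_sample M p) (\<lambda>X. L_fun k (emp_freq M X))\<bar> \<ge> t}
         \<le> 2 * exp (- (real M * t\<^sup>2 / 2))"
proof -
  have "measure_pmf.prob (iid_sample M p)
          {X. \<bar>L_fun k (emp_freq M X)
                - measure_pmf.expectation (iid_sample M p) (\<lambda>X. L_fun k (emp_freq M X))\<bar> \<ge> t}
        \<le> 2 * exp (-2 * t\<^sup>2 / (\<Sum>j\<in>{1..M}. (2 / real M)\<^sup>2))"
    unfolding iid_sample_def
    by (rule McDiarmid_inequality) (use assms L_fun_emp_freq_fun_upd in auto)
  also have "-2 * t\<^sup>2 / (\<Sum>j\<in>{1..M}. (2 / real M)\<^sup>2) = - (real M * t\<^sup>2 / 2)"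
    by (cases "M = 0") (simp_all add: power2_eq_square field_simps)
  finally show ?thesis .
qed

lemma L_fun_emp_freq_deviation:
  assumes "M \<ge> 1" and "finite (set_pmf p)" and "0 < \<epsilon>" and "\<epsilon> \<le> 2"
  shows "measure_pmf.prob (iid_sample M p)
           {X. \<bar>L_fun k (emp_freq M X) - L_fun k (pmf p)\<bar>
                 \<ge> 1 / real M + sqrt (2 / real M * ln (2 / \<epsilon>))} \<le> \<epsilon>"
proof -
  define t where "t = sqrt (2 / real M * ln (2 / \<epsilon>))"
  define \<mu> where "\<mu> = measure_pmf.expectation (iid_sample M p) (\<lambda>X. L_fun k (emp_freq M X))"
  have "ln (2 / \<epsilon>) \<ge> 0"
    using assms by simp
  then have "t \<ge> 0" and "real M * t\<^sup>2 / 2 = ln (2 / \<epsilon>)"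
    using assms by (simp_all add: t_def)
  have "{X. \<bar>L_fun k (emp_freq M X) - L_fun k (pmf p)\<bar> \<ge> 1 / real M + t}
        \<subseteq> {X. \<bar>L_fun k (emp_freq M X) - \<mu>\<bar> \<ge> t}"
    using L_fun_emp_freq_bias[OF assms(1,2), of k] by (auto simp: \<mu>_def)
  then have "measure_pmf.prob (iid_sample M p)
        {X. \<bar>L_fun k (emp_freq M X) - L_fun k (pmf p)\<bar> \<ge> 1 / real M + t}
      \<le> measure_pmf.prob (iid_sample M p) {X. \<bar>L_fun k (emp_freq M X) - \<mu>\<bar> \<ge> t}"
    by (rule measure_pmf.finite_measure_mono) simp
  also have "\<dots> \<le> 2 * exp (- (real M * t\<^sup>2 / 2))"
    unfolding \<mu>_def by (rule L_fun_emp_freq_concentration[OF assms(2) \<open>t \<ge> 0\<close>])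
  also have "\<dots> = \<epsilon>"
    using assms by (simp add: \<open>real M * t\<^sup>2 / 2 = ln (2 / \<epsilon>)\<close> exp_minus)
  finally show ?thesis by (simp add: t_def)
qed

theorem theorem3:
  fixes k M :: nat and p :: "nat pmf"
  assumes "M \<ge> 1"
    and "set_pmf p \<subseteq> {1..k}"
  shows "(\<forall>\<epsilon>::real. 0 < \<epsilon> \<and> \<epsilon> < 2 \<longrightarrow>
           measure_pmf.prob (iid_sample M p)
             {X. \<bar>L_fun k (emp_freq M X) - L_fun k (pmf p)\<bar>
                   \<ge> 1 / real M + sqrt (2 / real M * ln (2 / \<epsilon>))} \<le> \<epsilon>)
       \<and> measure_pmf.prob (iid_sample M p)
             {X. \<bar>L_fun k (emp_freq M X) - L_fun k (pmf p)\<bar>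
                   \<le> 1 / real M + sqrt (2 * ln (2 * real M) / real M)} \<ge> 1 - 1 / real M"
proof -
  have fin: "finite (set_pmf p)"
    using assms(2) finite_subset by blast
  let ?dev = "\<lambda>X. \<bar>L_fun k (emp_freq M X) - L_fun k (pmf p)\<bar>"
  define c where "c = 1 / real M + sqrt (2 * ln (2 * real M) / real M)"
  have "1 / real M \<le> 2"
    using assms(1) by (simp add: divide_le_eq)
  then have "measure_pmf.prob (iid_sample M p) {X. ?dev X \<ge> c} \<le> 1 / real M"
    using L_fun_emp_freq_deviation[OF assms(1) fin, of "1 / real M" k] assms(1)
    by (simp add: c_def)
  then have "1 - 1 / real M \<le> measure_pmf.prob (iid_sample M p) (UNIV - {X. ?dev X \<ge> c})"
    using measure_pmf.prob_compl[of "{X. ?dev X \<ge> c}" "iid_sample M p"] by simp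
  also have "\<dots> \<le> measure_pmf.prob (iid_sample M p) {X. ?dev X \<le> c}"
    by (rule measure_pmf.finite_measure_mono) auto
  finally show ?thesis
    using L_fun_emp_freq_deviation[OF assms(1) fin] by (auto simp: c_def)
qed

end
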